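(* Let $n\geq 3$ be an integer and $p$ a prime with $\gcd(n,p(p-1))=1$. Let $F(x_1,\ldots,x_r)=a_1x_1^n+a_2x_2^n+\cdots+a_rx_r^n$ with $a_1,\ldots,a_r$ integers such that $r>\frac{n}{2}$, $a_1a_2\cdots a_r\neq 0$, and $\nu_p(a_i)\not\equiv\nu_p(a_j)\pmod n$ for all $1\leq i<j\leq r$. Then $R(F)$ is dense in $\mathbb{Q}_p$.
   Context: For an integral form $F$ in $r$ variables, $R(F)=\{F(\overline{x})/F(\overline{y}):\overline{x},\overline{y}\in\mathbb{Z}^r,\ F(\overline{y})\neq 0\}$, viewed as a subset of the field $\mathbb{Q}_p$ of $p$-adic numbers with its $p$-adic topology. $\nu_p$ denotes the $p$-adic valuation. *)

theory Defs
  imports Complex_Main "HOL-Computational_Algebra.Computational_Algebra" "HOL-Number_Theory.Number_Theory"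
begin

text \<open>p-adic valuation of a rational number (value 0 at 0 by convention; never used there).\<close>
definition padic_val :: "int \<Rightarrow> rat \<Rightarrow> int" where
  "padic_val p q = (case quotient_of q of (a, b) \<Rightarrow>
      int (multiplicity p a) - int (multiplicity p b))"

definition padic_abs :: "int \<Rightarrow> rat \<Rightarrow> real" where
  "padic_abs p q = (if q = 0 then 0 else real_of_int p powr (- real_of_int (padic_val p q)))"

text \<open>Diagonal form F(x) = a_0 x_0^n + ... + a_{r-1} x_{r-1}^n (indices shifted to 0..r-1).\<close>
definition diag_form :: "(nat \<Rightarrow> int) \<Rightarrow> nat \<Rightarrow> nat \<Rightarrow> (nat \<Rightarrow> int) \<Rightarrow> int" where
  "diag_form a r n x = (\<Sum>i<r. a i * x i ^ n)"

definition ratio_set :: "((nat \<Rightarrow> int) \<Rightarrow> int) \<Rightarrow> rat set" where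
  "ratio_set F = {of_int (F x) / of_int (F y) | x y. F y \<noteq> 0}"

text \<open>Density in Q_p of a set of rationals: since Q is dense in Q_p, S \<subseteq> Q is dense in Q_p
  iff every rational is a p-adic limit point-or-member of S, i.e. S is dense in (Q, |.|_p).\<close>
definition padic_dense :: "int \<Rightarrow> rat set \<Rightarrow> bool" where
  "padic_dense p S \<longleftrightarrow> (\<forall>q::rat. \<forall>\<epsilon>::real. \<epsilon> > 0 \<longrightarrow> (\<exists>s\<in>S. padic_abs p (s - q) < \<epsilon>))"

end

theory Submission
  imports Defs
begin

text \<open>Since 2r > n, the r residues of nu_p(a_i) mod n and the r residues of nu_p(a_j) + nu_p(q)
  mod n must meet, so padding by n-th powers of p makes the valuations of a_i x^n and q a_j y^n
  agree. Because n is prime to phi(p^N) = p^(N-1)(p-1), the n-th power map permutes the units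
  modulo p^N, so the unit parts can be matched as well: a_i x^n / (a_j y^n) approximates q to any
  p-adic precision. The ratio 0 = F(0)/F(e_1) takes care of q = 0.\<close>

lemma images_intersect_if_card_lt:
  assumes "inj_on f A" "inj_on g A" "f ` A \<subseteq> S" "g ` A \<subseteq> S" "finite S"
    and "card S < 2 * card A"
  shows "\<exists>x\<in>A. \<exists>y\<in>A. f x = g y"
proof (rule ccontr)
  assume "\<not> ?thesis"
  then have disjoint: "f ` A \<inter> g ` A = {}" by blast
  have "finite A" by (rule card_ge_0_finite) (use assms(6) in simp)
  then have "2 * card A = card (f ` A \<union> g ` A)"
    using card_Un_disjoint[OF _ _ disjoint] card_image[OF assms(1)] card_image[OF assms(2)] by simp
  also have "\<dots> \<le> card S" using assms(3-5) by (intro card_mono) auto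
  finally show False using assms(6) by simp
qed

lemma exists_pair_congruent_up_to_shift:
  fixes \<alpha> :: "nat \<Rightarrow> int" and n r :: nat
  assumes "0 < n" "n < 2 * r"
    and distinct: "\<forall>i j. i < j \<and> j < r \<longrightarrow> \<not> [\<alpha> i = \<alpha> j] (mod int n)"
  shows "\<exists>i<r. \<exists>j<r. [\<alpha> i = \<alpha> j + v] (mod int n)"
proof -
  have inj_shift: "inj_on (\<lambda>i. (\<alpha> i + w) mod int n) {..<r}" for w
  proof (rule inj_onI)
    fix i j assume "i \<in> {..<r}" "j \<in> {..<r}" "(\<alpha> i + w) mod int n = (\<alpha> j + w) mod int n"
    then have "i < r" "j < r" "[\<alpha> i = \<alpha> j] (mod int n)"
      by (simp_all add: cong_def[symmetric] cong_add_rcancel)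
    then show "i = j" using distinct by (metis cong_sym linorder_neqE_nat)
  qed
  have "\<exists>i\<in>{..<r}. \<exists>j\<in>{..<r}. (\<alpha> i + 0) mod int n = (\<alpha> j + v) mod int n"
    by (rule images_intersect_if_card_lt[OF inj_shift inj_shift, where S = "{0..<int n}"])
      (use assms(1,2) in auto)
  then show ?thesis by (auto simp: cong_def)
qed

lemma nth_root_mod_exists:
  fixes B M :: int and n :: nat
  assumes "M > 1" "n > 0" "coprime n (totient (nat M))" "coprime B M"
  shows "\<exists>W. [W ^ n = B] (mod M)"
proof -
  define m where "m = totient (nat M)"
  have "residues M" using assms(1) by (simp add: residues_def)
  then have euler: "[B ^ m = 1] (mod M)"
    unfolding m_def using assms(4) by (rule residues.euler_theorem)
  have "gcd n m = 1" using assms(3) unfolding m_def coprime_iff_gcd_eq_1 .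
  then obtain x y where bezout: "n * x = m * y + 1"
    using bezout_nat[of n m] assms(2) by auto
  have "(B ^ x) ^ n = B ^ (m * y + 1)" by (simp only: bezout flip: power_mult mult.commute[of n x])
  also have "\<dots> = (B ^ m) ^ y * B" by (simp only: power_add power_mult power_one_right)
  also have "[\<dots> = 1 ^ y * B] (mod M)" by (intro cong_mult cong_pow euler cong_refl)
  finally have "[(B ^ x) ^ n = B] (mod M)" by simp
  then show ?thesis ..
qed

lemma coprime_totient_prime_power:
  fixes p :: int and n N :: nat
  assumes "prime p" "coprime (int n) (p * (p - 1))"
  shows "coprime n (totient (nat (p ^ N)))"
proof (cases N)
  case 0
  then show ?thesis by simp
next
  case (Suc k)
  have "p > 1" using assms(1) prime_gt_1_int by blast
  have "prime (nat p)" using assms(1) by (simp add: prime_nat_iff_prime)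
  moreover have "nat (p ^ N) = nat p ^ Suc k"
    unfolding Suc using \<open>p > 1\<close> by (intro nat_power_eq) simp
  ultimately have "totient (nat (p ^ N)) = nat p ^ k * (nat p - 1)"
    by (simp only: totient_prime_power_Suc)
  then have "int (totient (nat (p ^ N))) = p ^ k * (p - 1)"
    using \<open>p > 1\<close> by (simp add: of_nat_diff)
  moreover have "coprime (int n) (p ^ k * (p - 1))" using assms(2) by simp
  ultimately show ?thesis by (metis coprime_int_iff)
qed

lemma nth_power_congruence_mod_prime_power:
  fixes p A B :: int and n N :: nat
  assumes "prime p" "n > 0" "coprime (int n) (p * (p - 1))" "\<not> p dvd A" "\<not> p dvd B"
  shows "\<exists>W. [A * W ^ n = B] (mod p ^ N)"
proof (cases N)
  case 0
  then show ?thesis by simp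
next
  case (Suc k)
  have "p ^ N > 1" using prime_gt_1_int[OF assms(1)] Suc by (metis one_less_power zero_less_Suc)
  have "coprime p A" "coprime p B" using assms(1,4,5) by (simp_all add: prime_imp_coprime)
  then have coprime_A: "coprime A (p ^ N)" and coprime_B: "coprime B (p ^ N)"
    by (simp_all add: coprime_commute)
  then obtain A' where A': "[A * A' = 1] (mod p ^ N)" using cong_solve_coprime_int by blast
  then have "coprime (A * A') (p ^ N)" using cong_imp_coprime cong_sym by (metis coprime_1_left)
  then have "coprime (A' * B) (p ^ N)" using coprime_B by (simp only: coprime_mult_left_iff)
  then obtain W where W: "[W ^ n = A' * B] (mod p ^ N)"
    using nth_root_mod_exists[OF \<open>p ^ N > 1\<close> assms(2) coprime_totient_prime_power[OF assms(1,3)]]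
    by blast
  have "[A * W ^ n = A * (A' * B)] (mod p ^ N)" by (intro cong_mult cong_refl W)
  also have "A * (A' * B) = (A * A') * B" by (simp add: mult.assoc)
  also have "[\<dots> = 1 * B] (mod p ^ N)" by (intro cong_mult cong_refl A')
  finally have "[A * W ^ n = B] (mod p ^ N)" by simp
  then show ?thesis ..
qed

lemma scaled_nth_power_congruence:
  fixes p A B :: int and n :: nat
  assumes "prime p" "n > 0" "coprime (int n) (p * (p - 1))" "A \<noteq> 0" "B \<noteq> 0"
    and "[multiplicity p A = multiplicity p B] (mod n)"
  shows "\<exists>K. \<forall>N. \<exists>X. [A * X ^ n = B * (p ^ K) ^ n] (mod p ^ N)"
proof -
  have "\<not> is_unit p" using assms(1) not_prime_unit by blast
  obtain A' where A': "A = p ^ multiplicity p A * A'" "\<not> p dvd A'"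
    using multiplicity_decompose'[OF assms(4) \<open>\<not> is_unit p\<close>] by blast
  obtain B' where B': "B = p ^ multiplicity p B * B'" "\<not> p dvd B'"
    using multiplicity_decompose'[OF assms(5) \<open>\<not> is_unit p\<close>] by blast
  obtain K L where KL: "multiplicity p B + K * n = multiplicity p A + L * n"
    using assms(6) cong_iff_lin_nat by blast
  define e where "e = multiplicity p A + L * n"
  have "\<exists>X. [A * X ^ n = B * (p ^ K) ^ n] (mod p ^ N)" for N
  proof -
    obtain W where W: "[A' * W ^ n = B'] (mod p ^ N)"
      using nth_power_congruence_mod_prime_power[OF assms(1-3) A'(2) B'(2)] by blast
    have "A * (p ^ L * W) ^ n = p ^ e * (A' * W ^ n)"
      by (subst A'(1)) (simp add: e_def power_add power_mult_distrib power_mult mult_ac)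
    also have "[\<dots> = p ^ e * B'] (mod p ^ N)" by (intro cong_mult cong_refl W)
    also have "p ^ e * B' = B * (p ^ K) ^ n"
      by (subst B'(1)) (simp add: e_def KL[symmetric] power_add power_mult mult_ac)
    finally show ?thesis by blast
  qed
  then show ?thesis by blast
qed

lemma padic_val_of_int: "padic_val p (of_int z) = int (multiplicity p z)"
  by (simp add: padic_val_def quotient_of_int)

lemma padic_val_divide:
  fixes p a b :: int
  assumes "prime p" "a \<noteq> 0" "b \<noteq> 0"
  shows "padic_val p (of_int a / of_int b) = int (multiplicity p a) - int (multiplicity p b)"
proof -
  obtain c d where cd: "quotient_of (of_int a / of_int b) = (c, d)"
    by (cases "quotient_of (of_int a / of_int b)")
  have "d > 0" using quotient_of_denom_pos[OF cd] .
  have "(of_int a / of_int b :: rat) = of_int c / of_int d" using quotient_of_div[OF cd] .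
  then have "c \<noteq> 0" and "a * d = c * b"
    using assms(2,3) \<open>d > 0\<close> by (auto simp: field_simps simp flip: of_int_mult)
  moreover have "prime_elem p" using assms(1) by (rule prime_imp_prime_elem)
  ultimately have "multiplicity p a + multiplicity p d = multiplicity p c + multiplicity p b"
    using assms(2,3) \<open>d > 0\<close> by (metis prime_elem_multiplicity_mult_distrib less_irrefl)
  then show ?thesis unfolding padic_val_def cd by simp
qed

lemma padic_abs_divide_less_if_prime_power_dvd:
  fixes p den :: int and \<epsilon> :: real
  assumes "prime p" "den \<noteq> 0" "\<epsilon> > 0"
  obtains N where "\<And>num. p ^ N dvd num \<Longrightarrow> padic_abs p (of_int num / of_int den) < \<epsilon>"
proof -
  have "real_of_int p > 1" using prime_gt_1_int[OF assms(1)] by simp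
  then obtain N where N: "real_of_int p powr multiplicity p den / \<epsilon> < real_of_int p ^ N"
    using real_arch_pow by blast
  have "padic_abs p (of_int num / of_int den) < \<epsilon>" if "p ^ N dvd num" for num
  proof (cases "num = 0")
    case True
    then show ?thesis using assms(3) by (simp add: padic_abs_def)
  next
    case False
    have "N \<le> multiplicity p num"
      using that False assms(1) by (intro multiplicity_geI) (auto simp: not_prime_unit)
    have "padic_abs p (of_int num / of_int den)
        = real_of_int p powr (real (multiplicity p den) - real (multiplicity p num))"
      using False assms(1,2) by (simp add: padic_abs_def padic_val_divide)
    also have "\<dots> \<le> real_of_int p powr (real (multiplicity p den) - real N)"
      using \<open>N \<le> multiplicity p num\<close> \<open>real_of_int p > 1\<close> by (intro powr_mono) auto
    also have "\<dots> = real_of_int p powr multiplicity p den / real_of_int p ^ N"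
      using \<open>real_of_int p > 1\<close> by (simp add: powr_diff powr_realpow)
    also have "\<dots> < \<epsilon>"
      using N assms(3) \<open>real_of_int p > 1\<close> by (simp add: pos_divide_less_eq mult.commute)
    finally show ?thesis .
  qed
  then show ?thesis using that by blast
qed

lemma monomial_ratio_approximation:
  fixes p u w :: int and n :: nat and q :: rat and \<epsilon> :: real
  assumes "prime p" "n > 0" "coprime (int n) (p * (p - 1))" "u \<noteq> 0" "w \<noteq> 0" "q \<noteq> 0"
    and val_cong: "[padic_val p (of_int u) = padic_val p (of_int w) + padic_val p q] (mod int n)"
    and "\<epsilon> > 0"
  shows "\<exists>X Y. w * Y ^ n \<noteq> 0 \<and> padic_abs p (of_int (u * X ^ n) / of_int (w * Y ^ n) - q) < \<epsilon>"
proof -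
  obtain c d where cd: "quotient_of q = (c, d)" by (cases "quotient_of q")
  have "d > 0" and q: "q = of_int c / of_int d"
    using quotient_of_denom_pos[OF cd] quotient_of_div[OF cd] by auto
  have "c \<noteq> 0" using assms(6) q by auto
  define A B where "A = u * d" and "B = w * c"
  have "A \<noteq> 0" "B \<noteq> 0" unfolding A_def B_def using assms(4,5) \<open>c \<noteq> 0\<close> \<open>d > 0\<close> by auto
  have "prime_elem p" using assms(1) by (rule prime_imp_prime_elem)
  then have "int (multiplicity p A) = padic_val p (of_int u) + int (multiplicity p d)"
    and "int (multiplicity p B) = padic_val p (of_int w) + int (multiplicity p c)"
    unfolding A_def B_def padic_val_of_int using assms(4,5) \<open>c \<noteq> 0\<close> \<open>d > 0\<close>
    by (simp_all add: prime_elem_multiplicity_mult_distrib)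
  moreover have "padic_val p q = int (multiplicity p c) - int (multiplicity p d)"
    unfolding padic_val_def cd by simp
  moreover have "[padic_val p (of_int u) + int (multiplicity p d)
      = padic_val p (of_int w) + padic_val p q + int (multiplicity p d)] (mod int n)"
    by (intro cong_add val_cong cong_refl)
  ultimately have "[int (multiplicity p A) = int (multiplicity p B)] (mod int n)" by simp
  then have "[multiplicity p A = multiplicity p B] (mod n)" by (simp add: cong_int_iff)
  then obtain K where K: "\<And>N. \<exists>X. [A * X ^ n = B * (p ^ K) ^ n] (mod p ^ N)"
    using scaled_nth_power_congruence[OF assms(1-3) \<open>A \<noteq> 0\<close> \<open>B \<noteq> 0\<close>] by blast
  define Y where "Y = p ^ K"
  have "w * Y ^ n \<noteq> 0" unfolding Y_def using assms(1,5) by auto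
  define den where "den = w * Y ^ n * d"
  have "den \<noteq> 0" unfolding den_def using \<open>w * Y ^ n \<noteq> 0\<close> \<open>d > 0\<close> by simp
  obtain N where N: "\<And>num. p ^ N dvd num \<Longrightarrow> padic_abs p (of_int num / of_int den) < \<epsilon>"
    using padic_abs_divide_less_if_prime_power_dvd[OF assms(1) \<open>den \<noteq> 0\<close> assms(8)] by blast
  obtain X where "[A * X ^ n = B * Y ^ n] (mod p ^ N)" unfolding Y_def using K by blast
  then have "p ^ N dvd A * X ^ n - B * Y ^ n" by (simp add: cong_iff_dvd_diff)
  moreover have "of_int (u * X ^ n) / of_int (w * Y ^ n) - q = of_int (A * X ^ n - B * Y ^ n) / of_int den"
    unfolding q A_def B_def den_def using \<open>w * Y ^ n \<noteq> 0\<close> \<open>d > 0\<close> by (simp add: field_simps)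
  ultimately show ?thesis using N \<open>w * Y ^ n \<noteq> 0\<close> by metis
qed

lemma diag_form_single:
  assumes "i < r" "n > 0"
  shows "diag_form a r n (\<lambda>l. if l = i then X else 0) = a i * X ^ n"
proof -
  have summand: "(\<lambda>l. a l * (if l = i then X else 0) ^ n) = (\<lambda>l. if l = i then a i * X ^ n else 0)"
    using assms(2) by auto
  show ?thesis unfolding diag_form_def summand using assms(1) by simp
qed

lemma monomial_ratio_mem_ratio_set:
  assumes "i < r" "j < r" "n > 0" "a j * Y ^ n \<noteq> 0"
  shows "of_int (a i * X ^ n) / of_int (a j * Y ^ n) \<in> ratio_set (diag_form a r n)"
  unfolding ratio_set_def mem_Collect_eq
  by (rule exI[of _ "\<lambda>l. if l = i then X else 0"], rule exI[of _ "\<lambda>l. if l = j then Y else 0"])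
    (use assms in \<open>simp add: diag_form_single\<close>)

theorem theorem1p3:
  fixes n r :: nat and p :: int and a :: "nat \<Rightarrow> int"
  assumes "n \<ge> 3"
    and "prime p"
    and "gcd (int n) (p * (p - 1)) = 1"
    and "real r > real n / 2"
    and "(\<Prod>i<r. a i) \<noteq> 0"
    and "\<forall>i j. i < j \<and> j < r \<longrightarrow>
           \<not> [padic_val p (of_int (a i)) = padic_val p (of_int (a j))] (mod (int n))"
  shows "padic_dense p (ratio_set (diag_form a r n))"
  unfolding padic_dense_def
proof (intro allI impI)
  fix q :: rat and \<epsilon> :: real
  assume "\<epsilon> > 0"
  have "n > 0" "n < 2 * r" using assms(1,4) by linarith+
  then have "0 < r" by simp
  have coeff_nonzero: "a i \<noteq> 0" if "i < r" for i using assms(5) that by simp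
  have coprime: "coprime (int n) (p * (p - 1))" using assms(3) by (simp add: coprime_iff_gcd_eq_1)
  show "\<exists>s\<in>ratio_set (diag_form a r n). padic_abs p (s - q) < \<epsilon>"
  proof (cases "q = 0")
    case True
    have "of_int (a 0 * 0 ^ n) / of_int (a 0 * 1 ^ n) \<in> ratio_set (diag_form a r n)"
      using \<open>0 < r\<close> \<open>n > 0\<close> coeff_nonzero by (intro monomial_ratio_mem_ratio_set) auto
    then show ?thesis using True \<open>n > 0\<close> \<open>\<epsilon> > 0\<close> by (intro bexI) (auto simp: padic_abs_def)
  next
    case False
    obtain i j where "i < r" "j < r"
      and "[padic_val p (of_int (a i)) = padic_val p (of_int (a j)) + padic_val p q] (mod int n)"
      using exists_pair_congruent_up_to_shift[OF \<open>n > 0\<close> \<open>n < 2 * r\<close> assms(6)] by blast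
    with monomial_ratio_approximation[OF assms(2) \<open>n > 0\<close> coprime] obtain X Y
      where "a j * Y ^ n \<noteq> 0" "padic_abs p (of_int (a i * X ^ n) / of_int (a j * Y ^ n) - q) < \<epsilon>"
      using coeff_nonzero False \<open>\<epsilon> > 0\<close> by blast
    then show ?thesis using monomial_ratio_mem_ratio_set \<open>i < r\<close> \<open>j < r\<close> \<open>n > 0\<close> by blast
  qed
qed

end
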